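(* For every complex $s$ with $\Re(s)>3$, \[\sum_{k=1}^\infty k\,\zeta(s,2k)=\tfrac{1}{8}\Big\{(1+2^{1-s})\zeta(s-1)+\zeta(s-2)-2^{1-s}\Big(\zeta\big(s-1,\tfrac12\big)+\tfrac12 \zeta\big(s,\tfrac12\big)\Big)\Big\}.\]
   Context: $\zeta(s,\alpha)=\sum_{n=0}^\infty (n+\alpha)^{-s}$ denotes the Hurwitz zeta function ($\Re(s)>1$, $\alpha>0$), and $\zeta(s)=\zeta(s,1)$ is the Riemann zeta function. *)

theory Defs
  imports "HOL-Analysis.Analysis"
begin

text \<open>Hurwitz zeta function, defined by its Dirichlet series
  (meaningful for Re s > 1 and a > 0):
  hurwitz_zeta s a = sum over n \<ge> 0 of (n + a) powr (-s).\<close>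
definition hurwitz_zeta :: "complex \<Rightarrow> real \<Rightarrow> complex" where
  "hurwitz_zeta s a = (\<Sum>n. (complex_of_real (real n + a)) powr (- s))"

definition riemann_zeta :: "complex \<Rightarrow> complex" where
  "riemann_zeta s = hurwitz_zeta s 1"

end

theory Submission
  imports Defs
begin

text \<open>Expanding \<open>\<zeta>(s, 2k) = \<Sum>\<^sub>n (n + 2k)\<^sup>-\<^sup>s\<close> and exchanging the order of summation (the double
  series converges absolutely for \<open>Re s > 3\<close>) turns the left-hand side into \<open>\<Sum>\<^sub>m w(m) m\<^sup>-\<^sup>s\<close>, where
  \<open>w(m) = 1 + 2 + \<dots> + \<lfloor>m/2\<rfloor>\<close>. Since \<open>8 w(m)\<close> is \<open>m\<^sup>2 + 2m\<close> for even \<open>m\<close> and \<open>m\<^sup>2 - 1\<close> for odd \<open>m\<close>,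
  this is \<open>(\<zeta>(s - 2) + 2 E(s - 1) - O(s)) / 8\<close>, where \<open>E(z) = 2\<^sup>-\<^sup>z \<zeta>(z)\<close> and \<open>O(z) = (1 - 2\<^sup>-\<^sup>z) \<zeta>(z)\<close>
  are the even and odd parts of the Dirichlet series of \<open>\<zeta>(z)\<close>. The right-hand side reduces to the
  same combination because \<open>\<zeta>(z, 1/2) = 2\<^sup>z O(z)\<close>.\<close>

lemma of_nat_powr_add_of_nat:
  "(of_nat m :: complex) powr (z + of_nat k) = of_nat m ^ k * of_nat m powr z"
  by (cases "m = 0") (simp_all add: powr_add powr_nat')

lemma of_real_double_powr:
  assumes "0 \<le> x"
  shows "complex_of_real (2 * x) powr z = 2 powr z * of_real x powr z"
  using assms by (simp add: powr_times_real_left)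

lemma summable_norm_of_nat_powr:
  assumes "1 < Re z"
  shows "summable (\<lambda>m. norm ((of_nat m :: complex) powr - z))"
proof -
  have "norm ((of_nat m :: complex) powr - z) = real m powr - Re z" for m
    by (subst norm_powr_real_powr) auto
  with assms show ?thesis
    by (simp add: summable_real_powr_iff)
qed

lemma hurwitz_zeta_of_nat: "hurwitz_zeta z (real j) = (\<Sum>n. of_nat (n + j) powr - z)"
  unfolding hurwitz_zeta_def by simp

lemma sums_riemann_zeta:
  assumes "1 < Re z"
  shows "(\<lambda>m. of_nat m powr - z) sums riemann_zeta z"
proof -
  have "summable (\<lambda>m. (of_nat m :: complex) powr - z)"
    using summable_norm_of_nat_powr[OF assms] by (rule summable_norm_cancel)
  then have "summable (\<lambda>n. (of_nat (Suc n) :: complex) powr - z)"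
    by (subst summable_Suc_iff)
  moreover have "riemann_zeta z = (\<Sum>n. of_nat (Suc n) powr - z)"
    using hurwitz_zeta_of_nat[of z 1] by (simp add: riemann_zeta_def)
  ultimately have "(\<lambda>n. of_nat (Suc n) powr - z) sums riemann_zeta z"
    using summable_sums by metis
  then show ?thesis
    by (subst (asm) sums_Suc_iff) simp
qed

lemma sums_riemann_zeta_even:
  assumes "1 < Re z"
  shows "(\<lambda>m. if even m then of_nat m powr - z else 0) sums (2 powr - z * riemann_zeta z)"
proof -
  have "(\<lambda>n. 2 powr - z * of_nat n powr - z) sums (2 powr - z * riemann_zeta z)"
    using sums_riemann_zeta[OF assms] by (rule sums_mult)
  moreover have "(of_nat (2 * n) :: complex) powr - z = 2 powr - z * of_nat n powr - z" for n
    using of_real_double_powr[of "real n" "- z"] by simp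
  ultimately have "(\<lambda>n. of_nat (2 * n) powr - z) sums (2 powr - z * riemann_zeta z)"
    by simp
  moreover have "(\<lambda>n. (if even (2 * n) then of_nat (2 * n) powr - z else 0)) sums c \<longleftrightarrow>
      (\<lambda>m. if even m then of_nat m powr - z else 0) sums c" for c
    by (rule sums_mono_reindex) (auto simp: strict_mono_def)
  ultimately show ?thesis
    by simp
qed

lemma sums_riemann_zeta_odd:
  assumes "1 < Re z"
  shows "(\<lambda>m. if odd m then of_nat m powr - z else 0) sums ((1 - 2 powr - z) * riemann_zeta z)"
proof -
  have "(\<lambda>m. of_nat m powr - z - (if even m then of_nat m powr - z else 0)) sums
      (riemann_zeta z - 2 powr - z * riemann_zeta z)"
    using assms by (intro sums_diff sums_riemann_zeta sums_riemann_zeta_even)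
  moreover have "(\<lambda>m. of_nat m powr - z - (if even m then of_nat m powr - z else 0)) =
      (\<lambda>m. if odd m then of_nat m powr - z else 0)"
    by auto
  ultimately show ?thesis
    by (simp add: algebra_simps)
qed

lemma hurwitz_zeta_half:
  assumes "1 < Re z"
  shows "hurwitz_zeta z (1/2) = (2 powr z - 1) * riemann_zeta z"
proof -
  have two_powr_inverse: "2 powr z * 2 powr - z = (1 :: complex)"
    by (simp flip: powr_add)
  have "(\<lambda>n. of_nat (2 * n + 1) powr - z) sums ((1 - 2 powr - z) * riemann_zeta z)"
  proof -
    have "(\<lambda>n. (if odd (2 * n + 1) then of_nat (2 * n + 1) powr - z else 0)) sums c \<longleftrightarrow>
        (\<lambda>m. if odd m then of_nat m powr - z else 0) sums c" for c
      by (rule sums_mono_reindex) (auto simp: strict_mono_def elim!: oddE)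
    with sums_riemann_zeta_odd[OF assms] show ?thesis
      by simp
  qed
  then have "(\<lambda>n. 2 powr z * of_nat (2 * n + 1) powr - z) sums
      (2 powr z * ((1 - 2 powr - z) * riemann_zeta z))"
    by (rule sums_mult)
  moreover have "2 powr z * of_nat (2 * n + 1) powr - z = complex_of_real (real n + 1/2) powr - z" for n
  proof -
    have "(of_nat (2 * n + 1) :: complex) = of_real (2 * (real n + 1/2))"
      by (simp add: algebra_simps)
    moreover have "0 \<le> real n + 1/2"
      by simp
    ultimately have "(of_nat (2 * n + 1) :: complex) powr - z =
        2 powr - z * complex_of_real (real n + 1/2) powr - z"
      by (simp only: of_real_double_powr)
    with two_powr_inverse show ?thesis
      by (simp add: mult.assoc[symmetric])
  qed
  moreover have "2 powr z * ((1 - 2 powr - z) * riemann_zeta z) = (2 powr z - 1) * riemann_zeta z"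
    by (simp only: mult.assoc[symmetric] right_diff_distrib two_powr_inverse mult_1_right)
  ultimately have "(\<lambda>n. complex_of_real (real n + 1/2) powr - z) sums ((2 powr z - 1) * riemann_zeta z)"
    by simp
  then show ?thesis
    unfolding hurwitz_zeta_def by (rule sums_unique[symmetric])
qed

lemma two_times_sum_Suc_lessThan: "2 * (\<Sum>k<n. Suc k) = n * Suc n"
  by (induction n) auto

lemma eight_times_sum_Suc_lessThan_half:
  "8 * (of_nat (\<Sum>k<m div 2. Suc k) :: 'a :: comm_ring_1) =
     of_nat m ^ 2 + (if even m then 2 * of_nat m else - 1)"
proof -
  have "8 * (of_nat (\<Sum>k<m div 2. Suc k) :: 'a) = 4 * of_nat (2 * (\<Sum>k<m div 2. Suc k))"
    by simp
  also have "\<dots> = 4 * of_nat (m div 2) * (of_nat (m div 2) + 1)"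
    by (simp only: two_times_sum_Suc_lessThan) (simp add: algebra_simps)
  finally show ?thesis
    by (cases "even m") (auto elim!: evenE oddE simp: algebra_simps power2_eq_square)
qed

lemma sum_Suc_lessThan_half_le_square: "(\<Sum>k<m div 2. Suc k) \<le> m ^ 2"
proof -
  have "(\<Sum>k<m div 2. Suc k) \<le> (\<Sum>k<m div 2. m)"
    by (intro sum_mono) auto
  also have "\<dots> \<le> m ^ 2"
    by (simp add: power2_eq_square)
  finally show ?thesis .
qed

lemma has_sum_weighted_columns:
  fixes b :: "nat \<Rightarrow> 'a :: {banach, real_normed_div_algebra}"
  assumes summable: "summable (\<lambda>m. real m ^ 2 * norm (b m))"
  shows "((\<lambda>(m, k). of_nat (Suc k) * b m) has_sum (\<Sum>m. of_nat (\<Sum>k<m div 2. Suc k) * b m))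
           (SIGMA m:UNIV. {..<m div 2})"
proof -
  define w :: "nat \<Rightarrow> 'a" where "w m = of_nat (\<Sum>k<m div 2. Suc k)" for m
  define g :: "nat \<times> nat \<Rightarrow> 'a" where "g = (\<lambda>(m, k). of_nat (Suc k) * b m)"
  have "norm (w m) \<le> real m ^ 2" for m
    using sum_Suc_lessThan_half_le_square[of m]
    unfolding w_def norm_of_nat of_nat_power[symmetric] of_nat_le_iff .
  then have "(\<lambda>m. norm (w m * b m)) summable_on UNIV"
    by (intro summable_nonneg_imp_summable_on summable_comparison_test'[OF summable])
       (auto simp: norm_mult mult_right_mono)
  then have "(\<lambda>x. norm (g x)) summable_on (SIGMA m:UNIV. {..<m div 2})"
  proof (rule summable_on_SigmaI[rotated])
    fix m :: nat
    have "(\<Sum>k<m div 2. norm (g (m, k))) = (\<Sum>k<m div 2. real (Suc k)) * norm (b m)"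
      by (simp add: g_def norm_mult sum_distrib_right del: of_nat_Suc)
    also have "\<dots> = norm (w m * b m)"
      unfolding w_def norm_mult norm_of_nat by simp
    finally show "((\<lambda>k. norm (g (m, k))) has_sum norm (w m * b m)) {..<m div 2}"
      by (metis finite_lessThan has_sum_finite)
  qed simp
  then obtain T where T: "(g has_sum T) (SIGMA m:UNIV. {..<m div 2})"
    using abs_summable_summable summable_on_def by blast
  then have "((\<lambda>m. w m * b m) has_sum T) UNIV"
  proof (rule has_sum_SigmaD[where f = g])
    fix m :: nat
    show "((\<lambda>k. g (m, k)) has_sum w m * b m) {..<m div 2}"
      using has_sum_finite[of "{..<m div 2}" "\<lambda>k. g (m, k)"]
      by (simp add: g_def w_def sum_distrib_right)
  qed
  then have "T = (\<Sum>m. w m * b m)"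
    by (simp add: has_sum_imp_sums sums_unique)
  with T show ?thesis
    unfolding g_def w_def by simp
qed

text \<open>Fubini: the term \<open>b m\<close> occurs in the tail starting at \<open>2 * Suc k\<close> exactly when \<open>k < m div 2\<close>.\<close>
lemma sums_weighted_even_tails:
  fixes b :: "nat \<Rightarrow> 'a :: {banach, real_normed_div_algebra}"
  assumes summable: "summable (\<lambda>m. real m ^ 2 * norm (b m))"
  shows "(\<lambda>k. of_nat (Suc k) * (\<Sum>n. b (n + 2 * Suc k))) sums
           (\<Sum>m. of_nat (\<Sum>k<m div 2. Suc k) * b m)"
proof -
  define T where "T = (\<Sum>m. of_nat (\<Sum>k<m div 2. Suc k) * b m)"
  have grid: "((\<lambda>(k, n). of_nat (Suc k) * b (n + 2 * Suc k)) has_sum T) (UNIV \<times> UNIV)"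
    using has_sum_weighted_columns[OF summable] unfolding T_def
    by (subst has_sum_reindex_bij_witness[where j = "\<lambda>(k, n). (n + 2 * Suc k, k)"
          and i = "\<lambda>(m, k). (k, m - 2 * Suc k)" and T = "SIGMA m:UNIV. {..<m div 2}"]) auto
  have "summable (\<lambda>m. norm (b m))"
  proof (rule summable_comparison_test'[OF summable, where N = 1])
    fix m :: nat
    assume "1 \<le> m"
    then have "1 \<le> real m ^ 2"
      by simp
    from mult_right_mono[OF this norm_ge_zero] show "norm (norm (b m)) \<le> real m ^ 2 * norm (b m)"
      by simp
  qed
  then have tail: "summable (\<lambda>n. norm (b (n + j)))" for j
    by (rule summable_ignore_initial_segment)
  have "((\<lambda>n. b (n + j)) has_sum (\<Sum>n. b (n + j))) UNIV" for j
    by (rule norm_summable_imp_has_sum[OF tail summable_sums[OF summable_norm_cancel[OF tail]]])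
  then have rows: "((\<lambda>n. of_nat (Suc k) * b (n + 2 * Suc k)) has_sum
      of_nat (Suc k) * (\<Sum>n. b (n + 2 * Suc k))) UNIV" for k
    by (rule has_sum_cmult_right)
  have "((\<lambda>k. of_nat (Suc k) * (\<Sum>n. b (n + 2 * Suc k))) has_sum T) UNIV"
    by (rule has_sum_SigmaD[OF grid]) (simp only: case_prod_conv rows)
  then show ?thesis
    unfolding T_def by (rule has_sum_imp_sums)
qed

lemma sums_weighted_riemann_zeta:
  assumes "3 < Re s"
  shows "(\<lambda>m. of_nat (\<Sum>k<m div 2. Suc k) * of_nat m powr - s) sums
    ((riemann_zeta (s - 2) + 2 * (2 powr (1 - s) * riemann_zeta (s - 1))
       - (1 - 2 powr - s) * riemann_zeta s) / 8)"
proof -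
  have termwise: "of_nat (\<Sum>k<m div 2. Suc k) * of_nat m powr - s =
      (of_nat m powr - (s - 2) + 2 * (if even m then of_nat m powr - (s - 1) else 0)
        - (if odd m then of_nat m powr - s else 0)) / 8" for m
  proof -
    define W :: complex where "W = of_nat (\<Sum>k<m div 2. Suc k)"
    have "W * of_nat m powr - s = (8 * W) * of_nat m powr - s / 8"
      by simp
    also have "\<dots> = (of_nat m ^ 2 + (if even m then 2 * of_nat m else - 1)) * of_nat m powr - s / 8"
      unfolding W_def eight_times_sum_Suc_lessThan_half ..
    also have "\<dots> = (of_nat m powr - (s - 2) + 2 * (if even m then of_nat m powr - (s - 1) else 0)
        - (if odd m then of_nat m powr - s else 0)) / 8"
      using of_nat_powr_add_of_nat[of m "- s" 2] of_nat_powr_add_of_nat[of m "- s" 1]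
      by (cases "even m") (simp_all add: algebra_simps)
    finally show ?thesis
      unfolding W_def .
  qed
  have parts: "(\<lambda>m. (of_nat m powr - (s - 2) + 2 * (if even m then of_nat m powr - (s - 1) else 0)
        - (if odd m then of_nat m powr - s else 0)) / 8) sums
      ((riemann_zeta (s - 2) + 2 * (2 powr (1 - s) * riemann_zeta (s - 1))
       - (1 - 2 powr - s) * riemann_zeta s) / 8)"
  proof -
    have "(\<lambda>m. if even m then of_nat m powr - (s - 1) else 0) sums (2 powr (1 - s) * riemann_zeta (s - 1))"
      using sums_riemann_zeta_even[of "s - 1"] assms by simp
    with assms show ?thesis
      by (intro sums_divide sums_diff sums_add sums_mult sums_riemann_zeta sums_riemann_zeta_odd) simp_all
  qed
  show ?thesis
    unfolding termwise by (rule parts)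
qed

theorem mainTheorem10:
  fixes s :: complex
  assumes "Re s > 3"
  shows "(\<lambda>k. of_nat (Suc k) * hurwitz_zeta s (2 * real (Suc k))) sums
    ((1/8) * ((1 + 2 powr (1 - s)) * riemann_zeta (s - 1) + riemann_zeta (s - 2)
      - 2 powr (1 - s) * (hurwitz_zeta (s - 1) (1/2) + (1/2) * hurwitz_zeta s (1/2))))"
proof -
  have "real m ^ 2 * norm ((of_nat m :: complex) powr - s) = norm (of_nat m powr - (s - 2))" for m
    using of_nat_powr_add_of_nat[of m "- s" 2] by (simp add: norm_mult norm_power)
  then have summable: "summable (\<lambda>m. real m ^ 2 * norm ((of_nat m :: complex) powr - s))"
    using summable_norm_of_nat_powr[of "s - 2"] assms by simp
  have tails: "hurwitz_zeta s (2 * real (Suc k)) = (\<Sum>n. of_nat (n + 2 * Suc k) powr - s)" for k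
    using hurwitz_zeta_of_nat[of s "2 * Suc k"] by simp
  have "(\<lambda>k. of_nat (Suc k) * hurwitz_zeta s (2 * real (Suc k))) sums
      (\<Sum>m. of_nat (\<Sum>k<m div 2. Suc k) * of_nat m powr - s)"
    unfolding tails by (rule sums_weighted_even_tails[OF summable])
  also have "\<dots> = (riemann_zeta (s - 2) + 2 * (2 powr (1 - s) * riemann_zeta (s - 1))
       - (1 - 2 powr - s) * riemann_zeta s) / 8"
    using sums_weighted_riemann_zeta[OF assms] by (rule sums_unique[symmetric])
  also have "\<dots> = (1/8) * ((1 + 2 powr (1 - s)) * riemann_zeta (s - 1) + riemann_zeta (s - 2)
      - 2 powr (1 - s) * (hurwitz_zeta (s - 1) (1/2) + (1/2) * hurwitz_zeta s (1/2)))"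
  proof -
    have powers: "2 powr (s - 1) = 2 powr s / (2 :: complex)" "2 powr (1 - s) = 2 / (2 powr s :: complex)"
      "2 powr - s = 1 / (2 powr s :: complex)"
      by (simp_all add: powr_diff powr_minus inverse_eq_divide)
    have "1 < Re (s - 1)" "1 < Re s"
      using assms by simp_all
    note halves = hurwitz_zeta_half[OF this(1)] hurwitz_zeta_half[OF this(2)]
    show ?thesis
      unfolding halves powers by (simp add: field_simps)
  qed
  finally show ?thesis .
qed

end
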